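(* Let $p=(p_1,\dots,p_n)$ be a sequence of positive integers, let $k=\min_i p_i$, and let $A,B\subseteq S_p$ be a cross-intersecting pair of families. Then $|A|\cdot|B|\le |S_p|^2/k^2$. Equality holds for $A=B=\{x\in S_p : x_i=j\}$ whenever $i\in[n]$ satisfies $p_i=k$ and $j\in[k]$. If $k\neq 2$, these are the only cross-intersecting pairs $(A,B)$ attaining equality.
   Context: For a positive integer $m$, $[m]=\{1,\dots,m\}$. For a sequence of positive integers $p=(p_1,\dots,p_n)$, $S_p=[p_1]\times\cdots\times[p_n]$; its elements are called vectors. Two vectors $x,y\in S_p$ are $r$-intersecting if $|\{i\in[n]: x_i=y_i\}|\ge r$. Two families $A,B\subseteq S_p$ are $r$-cross-intersecting if every $x\in A$ and $y\in B$ are $r$-intersecting; "cross-intersecting" means $1$-cross-intersecting. *)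

theory Defs
  imports Complex_Main "HOL-Library.FuncSet"
begin

definition Sp :: "nat \<Rightarrow> (nat \<Rightarrow> nat) \<Rightarrow> (nat \<Rightarrow> nat) set" where
  "Sp n p = PiE {1..n} (\<lambda>i. {1..p i})"

definition r_intersecting :: "nat \<Rightarrow> nat \<Rightarrow> (nat \<Rightarrow> nat) \<Rightarrow> (nat \<Rightarrow> nat) \<Rightarrow> bool" where
  "r_intersecting n r x y \<longleftrightarrow> card {i \<in> {1..n}. x i = y i} \<ge> r"

definition r_cross_intersecting ::
  "nat \<Rightarrow> nat \<Rightarrow> (nat \<Rightarrow> nat) set \<Rightarrow> (nat \<Rightarrow> nat) set \<Rightarrow> bool" where
  "r_cross_intersecting n r A B \<longleftrightarrow> (\<forall>x\<in>A. \<forall>y\<in>B. r_intersecting n r x y)"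

abbreviation cross_intersecting where
  "cross_intersecting n A B \<equiv> r_cross_intersecting n 1 A B"

end

theory Submission
  imports Defs
begin

text \<open>Write \<open>a, b\<close> for the densities of \<open>A, B\<close> in \<open>S_p\<close> and \<open>m = k - 1\<close>. The key invariant is
  \<open>(1 - a)(1 - b) \<ge> m\<^sup>2 a b\<close> for every cross-intersecting pair with all \<open>p_i \<ge> k\<close>. It is proved by
  induction on \<open>n\<close>: slicing along the last coordinate gives densities \<open>a_j, b_l\<close> of cross-intersecting
  pairs for \<open>j \<noteq> l\<close>, and the invariant passes from such off-diagonal pairs to the averages over at
  least \<open>m + 1\<close> slices. By AM-GM the invariant gives \<open>a b \<le> 1/k\<^sup>2\<close>, with equality only for
  \<open>a = b = 1/k\<close>. For \<open>k \<ge> 3\<close> the equality cases of the averaging step force either all slices to be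
  extremal, so that by induction they are one and the same dictator family, or a single full slice,
  so that \<open>A = B\<close> is the dictator family of the last coordinate.\<close>

section \<open>The cross gap\<close>

definition cross_gap :: "real \<Rightarrow> real \<Rightarrow> real \<Rightarrow> real" where
  "cross_gap m x y = (1 - x) * (1 - y) - m^2 * x * y"

definition cross_slope :: "real \<Rightarrow> real \<Rightarrow> real" where
  "cross_slope m y = 1 + (m^2 - 1) * y"

lemma cross_gap_commute: "cross_gap m x y = cross_gap m y x"
  unfolding cross_gap_def by (simp add: algebra_simps)

lemma cross_gap_affine: "cross_gap m x y = (1 - y) - x * cross_slope m y"
  unfolding cross_gap_def cross_slope_def by (simp add: algebra_simps)

lemma one_le_cross_slope:
  fixes m y :: real
  assumes "1 \<le> m" "0 \<le> y"
  shows "1 \<le> cross_slope m y"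
proof -
  have "1 \<le> m^2" using assms(1) by (simp add: one_le_power)
  then show ?thesis using assms(2) by (simp add: cross_slope_def)
qed

lemma cross_slope_le:
  fixes m y :: real
  assumes "1 \<le> m" "y \<le> 1"
  shows "cross_slope m y \<le> m^2"
proof -
  have "0 \<le> m^2 - 1" using assms(1) by (simp add: one_le_power)
  then have "(m^2 - 1) * y \<le> m^2 - 1" using assms(2) mult_left_le by blast
  then show ?thesis by (simp add: cross_slope_def)
qed

lemma cross_gap_strict_antimono_left:
  assumes "1 \<le> m" "0 \<le> y" "x < x'"
  shows "cross_gap m x' y < cross_gap m x y"
  using one_le_cross_slope[OF assms(1,2)] assms(3)
  unfolding cross_gap_affine by (simp add: mult_strict_right_mono)

lemma cross_gap_antimono_left:
  assumes "1 \<le> m" "0 \<le> y" "x \<le> x'"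
  shows "cross_gap m x' y \<le> cross_gap m x y"
  using one_le_cross_slope[OF assms(1,2)] assms(3)
  unfolding cross_gap_affine by (simp add: mult_right_mono)

lemma cross_gap_strict_antimono_right:
  "1 \<le> m \<Longrightarrow> 0 \<le> x \<Longrightarrow> y < y' \<Longrightarrow> cross_gap m x y' < cross_gap m x y"
  by (subst (1 2) cross_gap_commute) (rule cross_gap_strict_antimono_left)

lemma cross_gap_antimono_right:
  "1 \<le> m \<Longrightarrow> 0 \<le> x \<Longrightarrow> y \<le> y' \<Longrightarrow> cross_gap m x y' \<le> cross_gap m x y"
  by (subst (1 2) cross_gap_commute) (rule cross_gap_antimono_left)

lemma cross_gap_average_left:
  assumes "finite J" "J \<noteq> {}"
  shows "cross_gap m (sum x J / card J) y = (\<Sum>j\<in>J. cross_gap m (x j) y) / card J"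
proof -
  have "(\<Sum>j\<in>J. cross_gap m (x j) y) = card J * (1 - y) - sum x J * cross_slope m y"
    by (simp add: cross_gap_affine sum_subtractf sum_distrib_right)
  then show ?thesis
    using assms by (simp add: cross_gap_affine field_simps card_gt_0_iff)
qed

lemma cross_gap_average_right:
  "finite J \<Longrightarrow> J \<noteq> {} \<Longrightarrow>
    cross_gap m x (sum y J / card J) = (\<Sum>j\<in>J. cross_gap m x (y j)) / card J"
  using cross_gap_average_left[of J m y x] by (simp add: cross_gap_commute)

text \<open>Splitting an index set into one index and \<open>r\<close> others: the four terms on the right are the
  gaps of the \<open>2 \<times> 2\<close> block of averages.\<close>

lemma cross_gap_split:
  fixes r s t u v :: real
  assumes "r + 1 \<noteq> 0"
  shows "(r + 1)^2 * cross_gap m ((s + r * u) / (r + 1)) ((t + r * v) / (r + 1))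
       = cross_gap m s t + r * (cross_gap m s v + cross_gap m u t) + r^2 * cross_gap m u v"
proof -
  define x y where "x = (s + r * u) / (r + 1)" and "y = (t + r * v) / (r + 1)"
  have xy: "(r + 1) * x = s + r * u" "(r + 1) * y = t + r * v"
    unfolding x_def y_def using assms by simp_all
  have "(r + 1)^2 * cross_gap m x y
      = ((r + 1) - (r + 1) * x) * ((r + 1) - (r + 1) * y) - m^2 * ((r + 1) * x) * ((r + 1) * y)"
    unfolding cross_gap_def by (simp add: algebra_simps power2_eq_square)
  then show ?thesis
    unfolding xy x_def[symmetric] y_def[symmetric] cross_gap_def
    by (simp add: algebra_simps power2_eq_square)
qed

lemma cross_gap_dual:
  assumes "u * cross_slope m t = 1 - t" "v * cross_slope m s = 1 - s"
  shows "cross_gap m u v * (cross_slope m s * cross_slope m t) = - (m^2 * cross_gap m s t)"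
proof -
  have "(1 - u) * cross_slope m t = m^2 * t" "(1 - v) * cross_slope m s = m^2 * s"
    using assms unfolding cross_slope_def by (simp_all add: algebra_simps)
  moreover have "cross_gap m u v * (cross_slope m s * cross_slope m t)
      = ((1 - u) * cross_slope m t) * ((1 - v) * cross_slope m s)
        - m^2 * (u * cross_slope m t) * (v * cross_slope m s)"
    unfolding cross_gap_def by (simp add: algebra_simps)
  ultimately have "cross_gap m u v * (cross_slope m s * cross_slope m t)
      = (m^2 * t) * (m^2 * s) - m^2 * (1 - t) * (1 - s)"
    unfolding assms by simp
  also have "\<dots> = - (m^2 * cross_gap m s t)"
    unfolding cross_gap_def by (simp add: algebra_simps power2_eq_square)
  finally show ?thesis .
qed

lemma cross_gap_opposite_corner_bound:
  fixes m s t u v :: real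
  assumes m: "1 \<le> m" and st: "0 \<le> s" "s \<le> 1" "0 \<le> t" "t \<le> 1" and uv: "0 \<le> u" "0 \<le> v"
    and gaps: "0 \<le> cross_gap m s v" "0 \<le> cross_gap m u t" "cross_gap m s t \<le> 0"
  shows "- cross_gap m s t \<le> m^2 * cross_gap m u v"
proof -
  define Ds Dt where "Ds = cross_slope m s" and "Dt = cross_slope m t"
  have D: "1 \<le> Ds" "Ds \<le> m^2" "1 \<le> Dt" "Dt \<le> m^2"
    unfolding Ds_def Dt_def using one_le_cross_slope cross_slope_le m st by auto
  txt \<open>The constraints on \<open>u\<close> and \<open>v\<close> are \<open>u \<le> u0\<close> and \<open>v \<le> v0\<close>, and the gap is smallest at
    \<open>(u0, v0)\<close>, where \<open>cross_gap_dual\<close> evaluates it.\<close>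
  define u0 v0 where "u0 = (1 - t) / Dt" and "v0 = (1 - s) / Ds"
  have root: "u0 * Dt = 1 - t" "v0 * Ds = 1 - s"
    unfolding u0_def v0_def using D by simp_all
  have "u * Dt \<le> 1 - t" "v * Ds \<le> 1 - s"
    using gaps(2) cross_gap_affine[of m u t] gaps(1) cross_gap_affine[of m v s]
    unfolding Ds_def Dt_def by (simp_all add: cross_gap_commute[of m s v])
  then have "u \<le> u0" "v \<le> v0"
    using root D by (simp_all add: u0_def v0_def field_simps)
  moreover have "0 \<le> u0"
    unfolding u0_def using D st by simp
  ultimately have gap_uv: "cross_gap m u0 v0 \<le> cross_gap m u v"
    using cross_gap_antimono_left[OF m uv(2)] cross_gap_antimono_right[OF m] by (meson order_trans)
  have "Ds * Dt \<le> m^2 * m^2" using D by (intro mult_mono) auto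
  then have "(- cross_gap m s t) * (Ds * Dt) \<le> (- cross_gap m s t) * (m^2 * m^2)"
    by (rule mult_left_mono) (use gaps(3) in simp_all)
  also have "\<dots> = (m^2 * cross_gap m u0 v0) * (Ds * Dt)"
    using cross_gap_dual[OF root[unfolded Ds_def Dt_def]] unfolding Ds_def Dt_def
    by (simp add: mult.assoc)
  finally have "- cross_gap m s t \<le> m^2 * cross_gap m u0 v0"
    by (rule mult_right_le_imp_le) (use D in simp)
  moreover have "m^2 * cross_gap m u0 v0 \<le> m^2 * cross_gap m u v"
    using gap_uv by (simp add: mult_left_mono)
  ultimately show ?thesis by linarith
qed

lemma cross_gap_opposite_corner_eq:
  fixes m s t u v :: real
  assumes m: "1 < m" and st: "0 \<le> s" "s \<le> 1" "0 \<le> t" "t \<le> 1"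
    and gaps: "cross_gap m s v = 0" "cross_gap m u t = 0" "cross_gap m s t < 0"
    and eq: "m^2 * cross_gap m u v = - cross_gap m s t"
  shows "s = 1 \<and> t = 1 \<and> u = 0 \<and> v = 0"
proof -
  define Ds Dt where "Ds = cross_slope m s" and "Dt = cross_slope m t"
  have D: "1 \<le> Ds" "Ds \<le> m^2" "1 \<le> Dt" "Dt \<le> m^2"
    unfolding Ds_def Dt_def using one_le_cross_slope cross_slope_le m st by (auto simp: less_imp_le)
  have root: "u * Dt = 1 - t" "v * Ds = 1 - s"
    using gaps(2) cross_gap_affine[of m u t] gaps(1) cross_gap_affine[of m v s]
    unfolding Ds_def Dt_def by (simp_all add: cross_gap_commute[of m s v])
  have "(- cross_gap m s t) * (Ds * Dt) = m^2 * (cross_gap m u v * (Ds * Dt))"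
    unfolding mult.assoc[symmetric] eq by simp
  also have "\<dots> = (- cross_gap m s t) * (m^2 * m^2)"
    using cross_gap_dual[OF root[unfolded Ds_def Dt_def]] unfolding Ds_def Dt_def by simp
  finally have "Ds * Dt = m^2 * m^2"
    using gaps(3) by simp
  moreover have "Ds * Dt \<le> Ds * m^2" "Ds * Dt \<le> m^2 * Dt"
    using D by (simp_all add: mult_left_mono mult_right_mono)
  ultimately have "m^2 * m^2 \<le> Ds * m^2" "m^2 * m^2 \<le> m^2 * Dt"
    by linarith+
  moreover have "0 < m^2" using m by simp
  ultimately have "Ds = m^2" "Dt = m^2"
    using mult_right_le_imp_le mult_left_le_imp_le D by (meson order.antisym)+
  then have "(m^2 - 1) * (s - 1) = 0" "(m^2 - 1) * (t - 1) = 0"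
    unfolding Ds_def Dt_def cross_slope_def by (simp_all add: algebra_simps)
  moreover have "1 < m^2" using m by (simp add: one_less_power)
  ultimately have "s = 1" "t = 1" by simp_all
  then show ?thesis
    using root \<open>Ds = m^2\<close> \<open>Dt = m^2\<close> m by simp
qed

lemma cross_gap_split_nonneg:
  fixes m r s t u v :: real
  assumes m: "1 \<le> m" "m \<le> r" and st: "0 \<le> s" "s \<le> 1" "0 \<le> t" "t \<le> 1"
    and uv: "0 \<le> u" "u \<le> s" "0 \<le> v"
    and gaps: "0 \<le> cross_gap m s v" "0 \<le> cross_gap m u t"
  shows "0 \<le> cross_gap m s t + r * (cross_gap m s v + cross_gap m u t) + r^2 * cross_gap m u v"
proof -
  have gap_uv: "0 \<le> cross_gap m u v"
    using cross_gap_antimono_left[OF m(1) uv(3,2)] gaps(1) by linarith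
  have "m^2 * cross_gap m u v \<le> r^2 * cross_gap m u v"
    using m gap_uv by (intro mult_right_mono power_mono) auto
  moreover have "0 \<le> r * (cross_gap m s v + cross_gap m u t)"
    using m gaps by simp
  moreover have "- cross_gap m s t \<le> m^2 * cross_gap m u v"
  proof (cases "cross_gap m s t \<le> 0")
    case True
    then show ?thesis using cross_gap_opposite_corner_bound[OF m(1) st uv(1,3) gaps] by simp
  next
    case False
    then show ?thesis using mult_nonneg_nonneg[OF zero_le_power2[of m] gap_uv] by linarith
  qed
  ultimately show ?thesis by linarith
qed

lemma cross_gap_split_eq_zero:
  fixes m r s t u v :: real
  assumes m: "1 < m" "m \<le> r" and st: "0 \<le> s" "s \<le> 1" "0 \<le> t" "t \<le> 1"
    and uv: "0 \<le> u" "u \<le> s" "0 \<le> v" "v < t"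
    and gaps: "0 \<le> cross_gap m s v" "0 \<le> cross_gap m u t"
    and zero: "cross_gap m s t + r * (cross_gap m s v + cross_gap m u t) + r^2 * cross_gap m u v = 0"
  shows "s = 1 \<and> t = 1 \<and> u = 0 \<and> v = 0 \<and> r = m"
proof -
  have m1: "1 \<le> m" and r: "0 < r" using m by simp_all
  have gap_uv: "0 \<le> cross_gap m u v"
    using cross_gap_antimono_left[OF m1 uv(3,2)] gaps(1) by linarith
  have sq: "m^2 * cross_gap m u v \<le> r^2 * cross_gap m u v"
    using m gap_uv by (intro mult_right_mono power_mono) auto
  have mid: "0 \<le> r * (cross_gap m s v + cross_gap m u t)"
    using r gaps by simp
  have gap_st: "cross_gap m s t < 0"
  proof (rule ccontr)
    assume "\<not> cross_gap m s t < 0"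
    then have "0 < cross_gap m s v"
      using cross_gap_strict_antimono_right[OF m1 st(1) uv(4)] by linarith
    then have "0 < r * (cross_gap m s v + cross_gap m u t)"
      using r gaps by simp
    then show False
      using zero mult_nonneg_nonneg[OF zero_le_power2[of r] gap_uv] \<open>\<not> cross_gap m s t < 0\<close>
      by linarith
  qed
  have "- cross_gap m s t \<le> m^2 * cross_gap m u v"
    using cross_gap_opposite_corner_bound[OF m1 st uv(1,3) gaps] gap_st by simp
  then have "r * (cross_gap m s v + cross_gap m u t) = 0"
    and "m^2 * cross_gap m u v = r^2 * cross_gap m u v"
    and corner: "m^2 * cross_gap m u v = - cross_gap m s t"
    using zero mid sq by linarith+
  then have "cross_gap m s v = 0" "cross_gap m u t = 0"
    using r gaps by simp_all
  then have stuv: "s = 1 \<and> t = 1 \<and> u = 0 \<and> v = 0"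
    using cross_gap_opposite_corner_eq[OF m(1) st _ _ gap_st corner] by simp
  then have "m^2 = r^2"
    using \<open>m^2 * cross_gap m u v = r^2 * cross_gap m u v\<close> by (simp add: cross_gap_def)
  then have "r = m"
    using m by (simp add: power2_eq_iff_nonneg)
  then show ?thesis using stuv by simp
qed

section \<open>Averaging off-diagonal pairs\<close>

lemma all_eq_bound_if_sum_eq:
  fixes x :: "'a \<Rightarrow> real" and M :: real
  assumes "finite J" "\<forall>j\<in>J. x j \<le> M" "sum x J = card J * M"
  shows "\<forall>j\<in>J. x j = M"
proof -
  have "(\<Sum>j\<in>J. M - x j) = 0"
    using assms(3) by (simp add: sum_subtractf)
  then show ?thesis
    using sum_nonneg_eq_0_iff[OF assms(1), of "\<lambda>j. M - x j"] assms(2) by simp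
qed

lemma cross_gap_average_separate_maxima:
  fixes x y :: "'a \<Rightarrow> real" and J :: "'a set"
  defines "X \<equiv> sum x J / card J" and "Y \<equiv> sum y J / card J"
  assumes J: "finite J" and m: "1 \<le> m" and jl: "j \<in> J" "l \<in> J"
    and nonneg: "\<forall>i\<in>J. 0 \<le> x i \<and> 0 \<le> y i"
    and max: "\<forall>i\<in>J. x i \<le> x j \<and> y i \<le> y l"
    and gap: "0 \<le> cross_gap m (x j) (y l)"
  shows "0 \<le> cross_gap m X Y \<and> (cross_gap m X Y = 0 \<longrightarrow> (\<forall>i\<in>J. x i = X \<and> y i = Y))"
proof -
  have card: "0 < card J" using J jl by (auto simp: card_gt_0_iff)
  have XY: "0 \<le> X" "X \<le> x j" "0 \<le> Y" "Y \<le> y l"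
    unfolding X_def Y_def using card nonneg max sum_bounded_above[of J x "x j"]
      sum_bounded_above[of J y "y l"] by (auto simp: sum_nonneg field_simps)
  have g1: "cross_gap m (x j) Y \<le> cross_gap m X Y"
    using cross_gap_antimono_left[OF m XY(3,2)] .
  have g2: "cross_gap m (x j) (y l) \<le> cross_gap m (x j) Y"
    using cross_gap_antimono_right[OF m _ XY(4)] nonneg jl by simp
  have "\<forall>i\<in>J. x i = X \<and> y i = Y" if zero: "cross_gap m X Y = 0"
  proof -
    have "X = x j"
    proof (rule ccontr)
      assume "X \<noteq> x j"
      then have "cross_gap m (x j) Y < cross_gap m X Y"
        using cross_gap_strict_antimono_left[OF m XY(3)] XY(2) by simp
      then show False using g2 gap zero by linarith
    qed
    moreover have "Y = y l"
    proof (rule ccontr)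
      assume "Y \<noteq> y l"
      then have "cross_gap m (x j) (y l) < cross_gap m (x j) Y"
        using cross_gap_strict_antimono_right[OF m] XY(4) nonneg jl by simp
      then show False using g1 gap zero by linarith
    qed
    ultimately have "sum x J = card J * x j" "sum y J = card J * y l"
      using card unfolding X_def Y_def by (simp_all add: field_simps)
    then show ?thesis
      using all_eq_bound_if_sum_eq[OF J] max \<open>X = x j\<close> \<open>Y = y l\<close> by blast
  qed
  then show ?thesis using g1 g2 gap by linarith
qed

lemma cross_gap_average_common_maximum:
  fixes x y :: "'a \<Rightarrow> real" and J :: "'a set" and m :: real
  defines "X \<equiv> sum x J / card J" and "Y \<equiv> sum y J / card J"
  assumes J: "finite J" and m: "1 \<le> m" and card: "m + 1 \<le> card J" and j: "j \<in> J"
    and range: "\<forall>i\<in>J. 0 \<le> x i \<and> x i \<le> 1 \<and> 0 \<le> y i \<and> y i \<le> 1"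
    and max: "\<forall>i\<in>J. x i \<le> x j" "\<forall>i\<in>J - {j}. y i < y j"
    and gaps: "\<forall>i\<in>J - {j}. 0 \<le> cross_gap m (x j) (y i) \<and> 0 \<le> cross_gap m (x i) (y j)"
  shows "0 \<le> cross_gap m X Y \<and> (1 < m \<longrightarrow> cross_gap m X Y = 0 \<longrightarrow>
           card J = m + 1 \<and> x j = 1 \<and> y j = 1 \<and> (\<forall>i\<in>J - {j}. x i = 0 \<and> y i = 0))"
proof -
  define J' where "J' = J - {j}"
  define r where "r = real (card J')"
  define u v where "u = sum x J' / r" and "v = sum y J' / r"
  have fin: "finite J'" unfolding J'_def using J by simp
  have card_J: "real (card J) = r + 1"
    unfolding r_def J'_def using card_Suc_Diff1[OF J j] by simp
  have r: "m \<le> r" using card card_J by simp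
  then have r_pos: "0 < r" using m by simp
  then have ne: "J' \<noteq> {}" unfolding r_def by auto
  have st: "0 \<le> x j" "x j \<le> 1" "0 \<le> y j" "y j \<le> 1" using range j by auto
  have uv: "0 \<le> u" "u \<le> x j" "0 \<le> v" "v < y j"
    unfolding u_def v_def r_def J'_def
    using r_pos range max sum_bounded_above[of "J - {j}" x "x j"]
      sum_bounded_above_strict[of "J - {j}" y "y j"]
      sum_nonneg[of "J - {j}" x] sum_nonneg[of "J - {j}" y]
    by (auto simp: field_simps r_def J'_def)
  have gap_v: "0 \<le> cross_gap m (x j) v"
    unfolding v_def r_def cross_gap_average_right[OF fin ne]
    using gaps by (auto simp: J'_def intro!: sum_nonneg divide_nonneg_nonneg)
  have gap_u: "0 \<le> cross_gap m u (y j)"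
    unfolding u_def r_def cross_gap_average_left[OF fin ne]
    using gaps by (auto simp: J'_def intro!: sum_nonneg divide_nonneg_nonneg)
  have "X = (x j + r * u) / (r + 1)" "Y = (y j + r * v) / (r + 1)"
    unfolding X_def Y_def u_def v_def card_J J'_def
    using sum.remove[OF J j, of x] sum.remove[OF J j, of y] r_pos by (simp_all add: J'_def)
  then have split: "(r + 1)^2 * cross_gap m X Y
      = cross_gap m (x j) (y j) + r * (cross_gap m (x j) v + cross_gap m u (y j)) + r^2 * cross_gap m u v"
    using cross_gap_split r_pos by simp
  have "0 \<le> (r + 1)^2 * cross_gap m X Y"
    unfolding split using cross_gap_split_nonneg[OF m r st uv(1,2,3) gap_v gap_u] .
  moreover have "card J = m + 1 \<and> x j = 1 \<and> y j = 1 \<and> (\<forall>i\<in>J - {j}. x i = 0 \<and> y i = 0)"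
    if "1 < m" "cross_gap m X Y = 0"
  proof -
    have "x j = 1 \<and> y j = 1 \<and> u = 0 \<and> v = 0 \<and> r = m"
      using cross_gap_split_eq_zero[OF that(1) r st uv gap_v gap_u] split that(2) by simp
    moreover have "sum x J' = 0 \<longleftrightarrow> (\<forall>i\<in>J'. x i = 0)" "sum y J' = 0 \<longleftrightarrow> (\<forall>i\<in>J'. y i = 0)"
      using sum_nonneg_eq_0_iff[OF fin, of x] sum_nonneg_eq_0_iff[OF fin, of y] range
      by (simp_all add: J'_def)
    ultimately show ?thesis
      using card_J r_pos unfolding u_def v_def J'_def by auto
  qed
  ultimately show ?thesis
    using r_pos by (simp add: zero_le_mult_iff)
qed

lemma cross_gap_average:
  fixes x y :: "'a \<Rightarrow> real" and J :: "'a set" and m :: real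
  defines "X \<equiv> sum x J / card J" and "Y \<equiv> sum y J / card J"
  assumes J: "finite J" and m: "1 \<le> m" and card: "m + 1 \<le> card J"
    and range: "\<forall>i\<in>J. 0 \<le> x i \<and> x i \<le> 1 \<and> 0 \<le> y i \<and> y i \<le> 1"
    and cross: "\<forall>i\<in>J. \<forall>l\<in>J. i \<noteq> l \<longrightarrow> 0 \<le> cross_gap m (x i) (y l)"
  shows "0 \<le> cross_gap m X Y \<and> (1 < m \<longrightarrow> cross_gap m X Y = 0 \<longrightarrow>
           (\<forall>i\<in>J. x i = X \<and> y i = Y) \<or>
           (card J = m + 1 \<and> (\<exists>j\<in>J. x j = 1 \<and> y j = 1 \<and> (\<forall>i\<in>J - {j}. x i = 0 \<and> y i = 0))))"
proof -
  txt \<open>Either the maxima of \<open>x\<close> and \<open>y\<close> sit at distinct indices and one admissible pair dominates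
    the averages, or a single index carries both, the one of \<open>y\<close> strictly, and is split off.\<close>
  have ne: "J \<noteq> {}" using card m by auto
  obtain j where j: "j \<in> J" "x j = Max (x ` J)"
    using Max_in[OF finite_imageI[OF J], of x] ne by (metis imageE image_is_empty)
  obtain l where l: "l \<in> J" "y l = Max (y ` J)"
    using Max_in[OF finite_imageI[OF J], of y] ne by (metis imageE image_is_empty)
  have max: "\<forall>i\<in>J. x i \<le> x j \<and> y i \<le> y l"
    using j(2) l(2) J by simp
  show ?thesis
  proof (cases "\<exists>i\<in>J. i \<noteq> j \<and> y i = y l")
    case True
    then obtain i where i: "i \<in> J" "i \<noteq> j" "y i = y l" by blast
    have "\<forall>i'\<in>J. x i' \<le> x j \<and> y i' \<le> y i"
      using max i(3) by simp
    moreover have "0 \<le> cross_gap m (x j) (y i)"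
      using cross j(1) i(1,2) by auto
    moreover have "\<forall>i\<in>J. 0 \<le> x i \<and> 0 \<le> y i" using range by simp
    ultimately show ?thesis
      using cross_gap_average_separate_maxima[OF J m j(1) i(1)] unfolding X_def Y_def by blast
  next
    case False
    then have "l = j" using l(1) by blast
    then have "\<forall>i\<in>J - {j}. y i < y j"
      using False max by force
    moreover have "\<forall>i\<in>J - {j}. 0 \<le> cross_gap m (x j) (y i) \<and> 0 \<le> cross_gap m (x i) (y j)"
      using cross j(1) by auto
    moreover have "\<forall>i\<in>J. x i \<le> x j" using max by simp
    ultimately have "0 \<le> cross_gap m X Y \<and> (1 < m \<longrightarrow> cross_gap m X Y = 0 \<longrightarrow>
        card J = m + 1 \<and> x j = 1 \<and> y j = 1 \<and> (\<forall>i\<in>J - {j}. x i = 0 \<and> y i = 0))"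
      using cross_gap_average_common_maximum[OF J m card j(1) range] unfolding X_def Y_def by blast
    then show ?thesis using j(1) by auto
  qed
qed

lemma product_le_of_cross_gap_nonneg:
  fixes m x y :: real
  assumes m: "0 \<le> m" and xy: "0 \<le> x" "x \<le> 1" "0 \<le> y" "y \<le> 1" and gap: "0 \<le> cross_gap m x y"
  shows "x * y \<le> 1 / (m + 1)^2"
proof -
  define g where "g = sqrt (x * y)"
  have g: "0 \<le> g" "g \<le> 1" "g^2 = x * y"
    unfolding g_def using xy by (simp_all add: mult_le_one)
  have "2 * g \<le> x + y"
    unfolding g_def using arith_geo_mean_sqrt[OF xy(1,3)] by simp
  moreover have "(1 - g)^2 - (m * g)^2 = 1 - 2 * g + (1 - m^2) * (x * y)"
    using g(3) by (simp add: power2_eq_square algebra_simps)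
  moreover have "0 \<le> 1 - (x + y) + (1 - m^2) * (x * y)"
    using gap unfolding cross_gap_def by (simp add: algebra_simps)
  ultimately have "(m * g)^2 \<le> (1 - g)^2"
    by linarith
  then have "m * g \<le> 1 - g"
    by (rule power2_le_imp_le) (use g(2) in simp)
  then have "g \<le> 1 / (m + 1)"
    using m by (simp add: field_simps)
  then have "g^2 \<le> (1 / (m + 1))^2"
    using g(1) by (rule power_mono)
  then show ?thesis
    using g(3) by (simp add: power_divide)
qed

lemma eq_of_cross_gap_nonneg_product_eq:
  fixes m x y :: real
  assumes m: "0 \<le> m" and xy: "0 \<le> x" "0 \<le> y" and gap: "0 \<le> cross_gap m x y"
    and eq: "x * y = 1 / (m + 1)^2"
  shows "x = 1 / (m + 1) \<and> y = 1 / (m + 1)"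
proof -
  have "x + y \<le> 1 + (1 - m^2) * (x * y)"
    using gap unfolding cross_gap_def by (simp add: algebra_simps)
  also have "\<dots> = 2 / (m + 1)"
  proof -
    have "1 - m^2 = (1 - m) * (m + 1)" by (simp add: power2_eq_square algebra_simps)
    then have "(1 - m^2) * (1 / (m + 1)^2) = (1 - m) / (m + 1)"
      using m by (simp add: power2_eq_square)
    then show ?thesis unfolding eq using m by (simp add: field_simps)
  qed
  finally have "(x + y)^2 \<le> (2 / (m + 1))^2"
    using xy by (intro power_mono) simp_all
  then have "(x - y)^2 \<le> 0"
    using eq by (simp add: power2_eq_square power_divide algebra_simps)
  then have "x = y" by simp
  then have "x^2 = (1 / (m + 1))^2"
    using eq by (simp add: power2_eq_square power_divide)
  then have "x = 1 / (m + 1)"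
    using xy m by (simp add: power2_eq_iff_nonneg)
  then show ?thesis using \<open>x = y\<close> by simp
qed

section \<open>Slices of families in \<open>S_p\<close>\<close>

lemma finite_Sp: "finite (Sp n p)"
  by (simp add: Sp_def finite_PiE)

lemma card_Sp: "card (Sp n p) = (\<Prod>i\<in>{1..n}. p i)"
  by (simp add: Sp_def card_PiE)

lemma card_Sp_pos: "\<forall>i\<in>{1..n}. 0 < p i \<Longrightarrow> 0 < card (Sp n p)"
  by (simp add: card_Sp prod_pos)

lemma card_Sp_Suc: "card (Sp (Suc n) p) = card (Sp n p) * p (Suc n)"
  by (simp add: card_Sp prod.nat_ivl_Suc')

lemma card_subset_Sp: "A \<subseteq> Sp n p \<Longrightarrow> card A \<le> card (Sp n p)"
  by (simp add: card_mono finite_Sp)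

lemma restrict_mem_Sp: "x \<in> Sp (Suc n) p \<Longrightarrow> restrict x {1..n} \<in> Sp n p"
  by (auto simp: Sp_def PiE_iff)

lemma last_mem_Sp: "x \<in> Sp (Suc n) p \<Longrightarrow> x (Suc n) \<in> {1..p (Suc n)}"
  by (auto simp: Sp_def PiE_iff)

lemma Sp_Suc_eqI:
  assumes "x \<in> Sp (Suc n) p" "y \<in> Sp (Suc n) p"
    and "restrict x {1..n} = restrict y {1..n}" "x (Suc n) = y (Suc n)"
  shows "x = y"
proof (rule extensionalityI[of x "{1..Suc n}"])
  show "x \<in> extensional {1..Suc n}" "y \<in> extensional {1..Suc n}"
    using assms(1,2) by (simp_all add: Sp_def PiE_iff)
  show "x i = y i" if "i \<in> {1..Suc n}" for i
    using that assms(4) fun_cong[OF assms(3), of i] by (cases "i = Suc n") auto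
qed

definition slice :: "nat \<Rightarrow> (nat \<Rightarrow> nat) set \<Rightarrow> nat \<Rightarrow> (nat \<Rightarrow> nat) set" where
  "slice n A j = (\<lambda>x. restrict x {1..n}) ` {x \<in> A. x (Suc n) = j}"

lemma slice_subset_Sp: "A \<subseteq> Sp (Suc n) p \<Longrightarrow> slice n A j \<subseteq> Sp n p"
  unfolding slice_def using restrict_mem_Sp by blast

lemma mem_iff_restrict_mem_slice:
  assumes "A \<subseteq> Sp (Suc n) p" "x \<in> Sp (Suc n) p"
  shows "x \<in> A \<longleftrightarrow> restrict x {1..n} \<in> slice n A (x (Suc n))"
proof
  assume "restrict x {1..n} \<in> slice n A (x (Suc n))"
  then obtain a where "a \<in> A" "a (Suc n) = x (Suc n)" "restrict a {1..n} = restrict x {1..n}"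
    unfolding slice_def by auto
  then show "x \<in> A"
    using Sp_Suc_eqI[of a n p x] assms by auto
qed (auto simp: slice_def)

lemma card_slice:
  assumes "A \<subseteq> Sp (Suc n) p"
  shows "card (slice n A j) = card {x \<in> A. x (Suc n) = j}"
  unfolding slice_def
proof (intro card_image inj_onI)
  fix x y assume "x \<in> {x \<in> A. x (Suc n) = j}" "y \<in> {x \<in> A. x (Suc n) = j}"
    and "restrict x {1..n} = restrict y {1..n}"
  then show "x = y" using assms Sp_Suc_eqI[of x n p y] by auto
qed

lemma card_eq_sum_card_slice:
  assumes "A \<subseteq> Sp (Suc n) p"
  shows "card A = (\<Sum>j\<in>{1..p (Suc n)}. card (slice n A j))"
proof -
  have "A = (\<Union>j\<in>{1..p (Suc n)}. {x \<in> A. x (Suc n) = j})"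
    using assms last_mem_Sp by blast
  moreover have "finite A" using assms finite_Sp finite_subset by blast
  then have "card (\<Union>j\<in>{1..p (Suc n)}. {x \<in> A. x (Suc n) = j})
      = (\<Sum>j\<in>{1..p (Suc n)}. card {x \<in> A. x (Suc n) = j})"
    by (intro card_UN_disjoint) auto
  ultimately have "card A = (\<Sum>j\<in>{1..p (Suc n)}. card {x \<in> A. x (Suc n) = j})"
    by simp
  then show ?thesis using card_slice[OF assms] by simp
qed

lemma cross_intersecting_slice:
  assumes "cross_intersecting (Suc n) A B" "j \<noteq> l"
  shows "cross_intersecting n (slice n A j) (slice n B l)"
  unfolding r_cross_intersecting_def r_intersecting_def
proof (intro ballI)
  fix a b assume "a \<in> slice n A j" "b \<in> slice n B l"
  then obtain x y where xy: "x \<in> A" "y \<in> B" "x (Suc n) = j" "y (Suc n) = l"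
    "a = restrict x {1..n}" "b = restrict y {1..n}"
    unfolding slice_def by auto
  have "{i \<in> {1..Suc n}. x i = y i} = {i \<in> {1..n}. a i = b i}"
    using xy(3-6) assms(2) by (auto simp: le_Suc_eq)
  moreover have "1 \<le> card {i \<in> {1..Suc n}. x i = y i}"
    using assms(1) xy(1,2) unfolding r_cross_intersecting_def r_intersecting_def by blast
  ultimately show "1 \<le> card {i \<in> {1..n}. a i = b i}" by simp
qed

definition density :: "nat \<Rightarrow> (nat \<Rightarrow> nat) \<Rightarrow> (nat \<Rightarrow> nat) set \<Rightarrow> real" where
  "density n p A = real (card A) / real (card (Sp n p))"

lemma density_nonneg: "0 \<le> density n p A"
  by (simp add: density_def)

lemma density_le_1: "A \<subseteq> Sp n p \<Longrightarrow> density n p A \<le> 1"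
  using card_subset_Sp[of A n p] by (cases "card (Sp n p) = 0") (simp_all add: density_def)

lemma density_empty [simp]: "density n p {} = 0"
  by (simp add: density_def)

lemma density_eq_1_imp:
  assumes "A \<subseteq> Sp n p" "density n p A = 1"
  shows "A = Sp n p"
proof -
  have "card A = card (Sp n p)"
    using assms(2) by (auto simp: density_def divide_eq_1_iff)
  then show ?thesis using card_subset_eq[OF finite_Sp assms(1)] by simp
qed

lemma density_eq_0_imp:
  assumes "A \<subseteq> Sp n p" "density n p A = 0"
  shows "A = {}"
proof (cases "card (Sp n p) = 0")
  case True
  then show ?thesis using assms(1) finite_Sp by (simp add: subset_empty)
next
  case False
  then have "card A = 0" using assms(2) by (simp add: density_def)
  then show ?thesis using finite_subset[OF assms(1) finite_Sp] by simp
qed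

lemma density_Sp_0:
  assumes "A \<subseteq> Sp 0 p"
  shows "density 0 p A = 0 \<or> density 0 p A = 1"
proof -
  have "card A \<le> 1" using card_subset_Sp[OF assms] by (simp add: card_Sp)
  then have "card A = 0 \<or> card A = 1" by linarith
  then show ?thesis by (auto simp: density_def card_Sp)
qed

lemma density_product:
  "real (card A * card B) / real (card (Sp n p))^2 = density n p A * density n p B"
  by (simp add: density_def power2_eq_square)

lemma average_density_slice:
  assumes "A \<subseteq> Sp (Suc n) p"
  shows "(\<Sum>j\<in>{1..p (Suc n)}. density n p (slice n A j)) / card {1..p (Suc n)} = density (Suc n) p A"
  unfolding density_def card_Sp_Suc card_eq_sum_card_slice[OF assms]
  by (simp add: sum_divide_distrib[symmetric])

definition dictator :: "nat \<Rightarrow> (nat \<Rightarrow> nat) \<Rightarrow> nat \<Rightarrow> nat \<Rightarrow> (nat \<Rightarrow> nat) set" where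
  "dictator n p i j = {x \<in> Sp n p. x i = j}"

lemma dictator_eq_PiE:
  assumes "i \<in> {1..n}" "j \<in> {1..p i}"
  shows "dictator n p i j = PiE {1..n} (\<lambda>l. if l = i then {j} else {1..p l})"
proof (intro set_eqI)
  fix x
  have "(\<forall>l\<in>{1..n}. x l \<in> (if l = i then {j} else {1..p l}))
      \<longleftrightarrow> (\<forall>l\<in>{1..n}. x l \<in> {1..p l}) \<and> x i = j"
    using assms by (metis singletonD singletonI)
  then show "x \<in> dictator n p i j \<longleftrightarrow> x \<in> PiE {1..n} (\<lambda>l. if l = i then {j} else {1..p l})"
    unfolding dictator_def Sp_def PiE_iff by blast
qed

lemma card_dictator:
  assumes "i \<in> {1..n}" "j \<in> {1..p i}"
  shows "card (dictator n p i j) * p i = card (Sp n p)"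
proof -
  let ?S = "\<lambda>l. if l = i then {j} else {1..p l}"
  have "card (dictator n p i j) = (\<Prod>l\<in>{1..n}. card (?S l))"
    unfolding dictator_eq_PiE[where p = p, OF assms] by (simp add: card_PiE)
  also have "\<dots> = card (?S i) * (\<Prod>l\<in>{1..n} - {i}. card (?S l))"
    using prod.remove[OF finite_atLeastAtMost assms(1)] .
  also have "\<dots> = (\<Prod>l\<in>{1..n} - {i}. p l)"
    by (auto intro: prod.cong)
  finally show ?thesis
    using prod.remove[OF finite_atLeastAtMost assms(1), of p] by (simp add: card_Sp)
qed

lemma cross_intersecting_dictator:
  assumes "i \<in> {1..n}"
  shows "cross_intersecting n (dictator n p i j) (dictator n p i j)"
  unfolding r_cross_intersecting_def r_intersecting_def
proof (intro ballI)
  fix x y assume "x \<in> dictator n p i j" "y \<in> dictator n p i j"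
  then have "i \<in> {l \<in> {1..n}. x l = y l}" using assms by (simp add: dictator_def)
  then have "0 < card {l \<in> {1..n}. x l = y l}"
    by (auto simp: card_gt_0_iff)
  then show "1 \<le> card {l \<in> {1..n}. x l = y l}" by simp
qed

lemma dictator_if_slices_eq_dictator:
  assumes "A \<subseteq> Sp (Suc n) p" "i \<in> {1..n}"
    and "\<forall>j\<in>{1..p (Suc n)}. slice n A j = dictator n p i j0"
  shows "A = dictator (Suc n) p i j0"
proof -
  have "x \<in> A \<longleftrightarrow> x i = j0" if x: "x \<in> Sp (Suc n) p" for x
  proof -
    have "x \<in> A \<longleftrightarrow> restrict x {1..n} \<in> dictator n p i j0"
      using mem_iff_restrict_mem_slice[OF assms(1) x] assms(3) last_mem_Sp[OF x] by simp
    also have "\<dots> \<longleftrightarrow> x i = j0"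
      using restrict_mem_Sp[OF x] assms(2) by (simp add: dictator_def)
    finally show ?thesis .
  qed
  then show ?thesis using assms(1) by (auto simp: dictator_def)
qed

lemma dictator_last_if_slice_densities:
  assumes "A \<subseteq> Sp (Suc n) p" "density n p (slice n A j0) = 1"
    and "\<forall>j\<in>{1..p (Suc n)} - {j0}. density n p (slice n A j) = 0"
  shows "A = dictator (Suc n) p (Suc n) j0"
proof -
  have full: "slice n A j0 = Sp n p"
    using density_eq_1_imp[OF slice_subset_Sp[OF assms(1)] assms(2)] .
  have empty: "slice n A j = {}" if "j \<in> {1..p (Suc n)} - {j0}" for j
    using density_eq_0_imp[OF slice_subset_Sp[OF assms(1)]] assms(3) that by blast
  have "x \<in> A \<longleftrightarrow> x (Suc n) = j0" if x: "x \<in> Sp (Suc n) p" for x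
    using mem_iff_restrict_mem_slice[OF assms(1) x] full empty restrict_mem_Sp[OF x] last_mem_Sp[OF x]
    by (cases "x (Suc n) = j0") auto
  then show ?thesis using assms(1) by (auto simp: dictator_def)
qed

lemma eq_if_eq_off_diagonal:
  assumes eq: "\<forall>j\<in>J. \<forall>l\<in>J. j \<noteq> l \<longrightarrow> f j = g l" and card: "2 < card J"
    and jl: "j \<in> J" "l \<in> J"
  shows "f j = g l"
proof (cases "j = l")
  case True
  have fin: "finite J" using card card.infinite by fastforce
  then have "1 < card (J - {j})" using card jl(1) by (simp add: card_Diff_singleton)
  then obtain h where h: "h \<in> J" "h \<noteq> j" by (metis card_gt_0_iff DiffE all_not_in_conv singletonI less_trans zero_less_one)
  then have "0 < card (J - {j} - {h})"
    using \<open>1 < card (J - {j})\<close> fin by (simp add: card_Diff_singleton)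
  then obtain q where "q \<in> J" "q \<noteq> j" "q \<noteq> h" by (metis card_gt_0_iff DiffE all_not_in_conv singletonI)
  then have "f j = g h" "f q = g h" "f q = g j"
    using eq h jl(1) by metis+
  then show ?thesis using True by simp
next
  case False
  then show ?thesis using eq jl by blast
qed

lemma dictator_if_slice_pairs_dictator:
  assumes AB: "A \<subseteq> Sp (Suc n) p" "B \<subseteq> Sp (Suc n) p" and three: "3 \<le> p (Suc n)"
    and pairs: "\<forall>j\<in>{1..p (Suc n)}. \<forall>l\<in>{1..p (Suc n)}. j \<noteq> l \<longrightarrow>
      (\<exists>i\<in>{1..n}. p i = k \<and> (\<exists>j0\<in>{1..k}. slice n A j = dictator n p i j0 \<and> slice n B l = dictator n p i j0))"
  shows "\<exists>i\<in>{1..Suc n}. p i = k \<and> (\<exists>j0\<in>{1..k}. A = dictator (Suc n) p i j0 \<and> B = dictator (Suc n) p i j0)"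
proof -
  let ?J = "{1..p (Suc n)}"
  have "\<forall>j\<in>?J. \<forall>l\<in>?J. j \<noteq> l \<longrightarrow> slice n A j = slice n B l"
    using pairs by fastforce
  then have same: "slice n A j = slice n B l" if "j \<in> ?J" "l \<in> ?J" for j l
    using eq_if_eq_off_diagonal[of ?J] three that by simp
  have one_two: "1 \<in> ?J" "2 \<in> ?J" using three by auto
  then obtain i j0 where i: "i \<in> {1..n}" "p i = k" "j0 \<in> {1..k}" "slice n A 1 = dictator n p i j0"
    using pairs by fastforce
  have "\<forall>j\<in>?J. slice n A j = dictator n p i j0" "\<forall>j\<in>?J. slice n B j = dictator n p i j0"
    using same[OF _ one_two(1)] same[OF one_two(1)] i(4) by auto
  then have "A = dictator (Suc n) p i j0" "B = dictator (Suc n) p i j0"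
    using dictator_if_slices_eq_dictator[OF AB(1) i(1)] dictator_if_slices_eq_dictator[OF AB(2) i(1)]
    by blast+
  moreover have "i \<in> {1..Suc n}" using i(1) by simp
  ultimately show ?thesis using i(2,3) by blast
qed

section \<open>The density invariant and the extremal families\<close>

lemma density_slice_range:
  "A \<subseteq> Sp (Suc n) p \<Longrightarrow> 0 \<le> density n p (slice n A j) \<and> density n p (slice n A j) \<le> 1"
  using density_nonneg density_le_1[OF slice_subset_Sp] by blast

lemma cross_gap_density_nonneg:
  assumes k: "1 \<le> k" and p: "\<forall>i\<in>{1..n}. k \<le> p i"
    and AB: "A \<subseteq> Sp n p" "B \<subseteq> Sp n p" and cross: "cross_intersecting n A B"
  shows "0 \<le> cross_gap (real k - 1) (density n p A) (density n p B)"
  using p AB cross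
proof (induction n arbitrary: A B)
  case 0
  then have "A = {} \<or> B = {}"
    by (auto simp: r_cross_intersecting_def r_intersecting_def)
  then show ?case
    using density_le_1[OF "0.prems"(2)] density_le_1[OF "0.prems"(3)] by (auto simp: cross_gap_def)
next
  case (Suc n)
  let ?m = "real k - 1" and ?J = "{1..p (Suc n)}"
  show ?case
  proof (cases "k = 1")
    case True
    then show ?thesis
      using density_le_1[OF Suc.prems(2)] density_le_1[OF Suc.prems(3)] by (simp add: cross_gap_def)
  next
    case False
    define x y where "x j = density n p (slice n A j)" and "y j = density n p (slice n B j)" for j
    have m: "1 \<le> ?m" using k False by simp
    have card: "?m + 1 \<le> card ?J" using Suc.prems(1) by simp
    have range: "\<forall>j\<in>?J. 0 \<le> x j \<and> x j \<le> 1 \<and> 0 \<le> y j \<and> y j \<le> 1"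
      unfolding x_def y_def using density_slice_range Suc.prems(2,3) by blast
    have "\<forall>j\<in>?J. \<forall>l\<in>?J. j \<noteq> l \<longrightarrow> 0 \<le> cross_gap ?m (x j) (y l)"
      unfolding x_def y_def
      using Suc.IH Suc.prems slice_subset_Sp cross_intersecting_slice by simp
    then have "0 \<le> cross_gap ?m (sum x ?J / card ?J) (sum y ?J / card ?J)"
      using cross_gap_average[OF finite_atLeastAtMost m card range] by blast
    then show ?thesis
      unfolding x_def y_def average_density_slice[OF Suc.prems(2)] average_density_slice[OF Suc.prems(3)] .
  qed
qed

lemma dictator_if_density_eq:
  assumes k: "3 \<le> k" and p: "\<forall>i\<in>{1..n}. k \<le> p i"
    and AB: "A \<subseteq> Sp n p" "B \<subseteq> Sp n p" and cross: "cross_intersecting n A B"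
    and density: "density n p A = 1 / k" "density n p B = 1 / k"
  shows "\<exists>i\<in>{1..n}. p i = k \<and> (\<exists>j\<in>{1..k}. A = dictator n p i j \<and> B = dictator n p i j)"
  using p AB cross density
proof (induction n arbitrary: A B)
  case 0
  then show ?case using density_Sp_0[OF "0.prems"(2)] k by auto
next
  case (Suc n)
  let ?m = "real k - 1" and ?J = "{1..p (Suc n)}"
  define x y where "x j = density n p (slice n A j)" and "y j = density n p (slice n B j)" for j
  have m: "1 < ?m" using k by simp
  have card: "?m + 1 \<le> card ?J" using Suc.prems(1) by simp
  have range: "\<forall>j\<in>?J. 0 \<le> x j \<and> x j \<le> 1 \<and> 0 \<le> y j \<and> y j \<le> 1"
    unfolding x_def y_def using density_slice_range Suc.prems(2,3) by blast
  have "\<forall>j\<in>?J. \<forall>l\<in>?J. j \<noteq> l \<longrightarrow> 0 \<le> cross_gap ?m (x j) (y l)"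
    unfolding x_def y_def using cross_gap_density_nonneg k Suc.prems slice_subset_Sp cross_intersecting_slice
    by simp
  moreover have "sum x ?J / card ?J = 1 / k" "sum y ?J / card ?J = 1 / k"
    unfolding x_def y_def average_density_slice[OF Suc.prems(2)] average_density_slice[OF Suc.prems(3)]
    using Suc.prems(5,6) by simp_all
  moreover have "cross_gap ?m (1 / k) (1 / k) = 0"
    using k by (simp add: cross_gap_def field_simps power2_eq_square)
  ultimately have "(\<forall>j\<in>?J. x j = 1 / k \<and> y j = 1 / k) \<or>
      (card ?J = ?m + 1 \<and> (\<exists>j\<in>?J. x j = 1 \<and> y j = 1 \<and> (\<forall>i\<in>?J - {j}. x i = 0 \<and> y i = 0)))"
    using cross_gap_average[OF finite_atLeastAtMost less_imp_le[OF m] card range] m by auto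
  then show ?case
  proof
    assume "\<forall>j\<in>?J. x j = 1 / k \<and> y j = 1 / k"
    then have "\<forall>j\<in>?J. \<forall>l\<in>?J. j \<noteq> l \<longrightarrow> (\<exists>i\<in>{1..n}. p i = k \<and>
        (\<exists>j0\<in>{1..k}. slice n A j = dictator n p i j0 \<and> slice n B l = dictator n p i j0))"
      unfolding x_def y_def using Suc.IH Suc.prems slice_subset_Sp cross_intersecting_slice by simp
    moreover have "3 \<le> p (Suc n)" using Suc.prems(1) k by force
    ultimately show ?thesis
      using dictator_if_slice_pairs_dictator[OF Suc.prems(2,3)] by blast
  next
    assume "card ?J = ?m + 1 \<and> (\<exists>j\<in>?J. x j = 1 \<and> y j = 1 \<and> (\<forall>i\<in>?J - {j}. x i = 0 \<and> y i = 0))"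
    then obtain j where "p (Suc n) = k" "j \<in> {1..k}"
      "density n p (slice n A j) = 1" "density n p (slice n B j) = 1"
      "\<forall>i\<in>?J - {j}. density n p (slice n A i) = 0 \<and> density n p (slice n B i) = 0"
      unfolding x_def y_def by auto
    then show ?thesis
      using dictator_last_if_slice_densities[OF Suc.prems(2)] dictator_last_if_slice_densities[OF Suc.prems(3)]
      by fastforce
  qed
qed

lemma cross_intersecting_card_product_le:
  assumes k: "1 \<le> k" and p: "\<forall>i\<in>{1..n}. k \<le> p i"
    and AB: "A \<subseteq> Sp n p" "B \<subseteq> Sp n p" and cross: "cross_intersecting n A B"
  shows "real (card A * card B) \<le> real (card (Sp n p))^2 / real k^2"
proof -
  have "density n p A * density n p B \<le> 1 / (real k - 1 + 1)^2"
    using product_le_of_cross_gap_nonneg[OF _ density_nonneg density_le_1[OF AB(1)]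
        density_nonneg density_le_1[OF AB(2)] cross_gap_density_nonneg[OF k p AB cross]] k
    by simp
  moreover have "0 < card (Sp n p)"
    using p k by (intro card_Sp_pos) force
  ultimately have "real (card A * card B) / real (card (Sp n p))^2 * real (card (Sp n p))^2
      \<le> 1 / real k^2 * real (card (Sp n p))^2"
    unfolding density_product by (intro mult_right_mono) simp_all
  then show ?thesis
    using \<open>0 < card (Sp n p)\<close> by simp
qed
lemma cross_intersecting_card_product_eq_imp_dictator:
  assumes k: "1 \<le> k" "k \<noteq> 2" and p: "\<forall>i\<in>{1..n}. k \<le> p i" and i0: "i0 \<in> {1..n}" "p i0 = k"
    and AB: "A \<subseteq> Sp n p" "B \<subseteq> Sp n p" and cross: "cross_intersecting n A B"
    and eq: "real (card A * card B) = real (card (Sp n p))^2 / real k^2"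
  shows "\<exists>i\<in>{1..n}. p i = k \<and> (\<exists>j\<in>{1..k}. A = dictator n p i j \<and> B = dictator n p i j)"
proof -
  have "0 < card (Sp n p)"
    using p k by (intro card_Sp_pos) force
  then have "density n p A * density n p B = 1 / (real k - 1 + 1)^2"
    unfolding density_product[symmetric] eq by simp
  then have density: "density n p A = 1 / k" "density n p B = 1 / k"
    using eq_of_cross_gap_nonneg_product_eq[OF _ density_nonneg density_nonneg
        cross_gap_density_nonneg[OF k(1) p AB cross]] k(1) by simp_all
  show ?thesis
  proof (cases "k = 1")
    case True
    then have "A = Sp n p" "B = Sp n p"
      using density_eq_1_imp AB density by simp_all
    moreover have "x i0 = 1" if "x \<in> Sp n p" for x
      using PiE_mem[OF that[unfolded Sp_def] i0(1)] i0(2) True by simp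
    then have "dictator n p i0 1 = Sp n p"
      by (auto simp: dictator_def)
    ultimately show ?thesis using i0 True by auto
  next
    case False
    then show ?thesis using dictator_if_density_eq[OF _ p AB cross density] k by simp
  qed
qed

lemma card_dictator_product:
  assumes "i \<in> {1..n}" "j \<in> {1..p i}"
  shows "real (card (dictator n p i j) * card (dictator n p i j)) = real (card (Sp n p))^2 / real (p i)^2"
proof -
  have "real (card (Sp n p)) = real (card (dictator n p i j)) * real (p i)"
    using card_dictator[where p = p, OF assms] by (metis of_nat_mult)
  moreover have "0 < p i" using assms(2) by simp
  ultimately show ?thesis by (simp add: power_mult_distrib power2_eq_square)
qed

theorem theorem1:
  fixes n :: nat and p :: "nat \<Rightarrow> nat"
  assumes "n \<ge> 1"
    and "\<forall>i\<in>{1..n}. p i > 0"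
  defines "k \<equiv> Min (p ` {1..n})"
  shows "(\<forall>A B. A \<subseteq> Sp n p \<and> B \<subseteq> Sp n p \<and> cross_intersecting n A B \<longrightarrow>
            real (card A * card B) \<le> real (card (Sp n p))^2 / real k^2)
       \<and> (\<forall>i\<in>{1..n}. p i = k \<longrightarrow> (\<forall>j\<in>{1..k}.
            cross_intersecting n {x \<in> Sp n p. x i = j} {x \<in> Sp n p. x i = j} \<and>
            real (card {x \<in> Sp n p. x i = j} * card {x \<in> Sp n p. x i = j})
              = real (card (Sp n p))^2 / real k^2))
       \<and> (k \<noteq> 2 \<longrightarrow> (\<forall>A B. A \<subseteq> Sp n p \<and> B \<subseteq> Sp n p \<and> cross_intersecting n A B \<and>
            real (card A * card B) = real (card (Sp n p))^2 / real k^2 \<longrightarrow>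
            (\<exists>i\<in>{1..n}. p i = k \<and> (\<exists>j\<in>{1..k}.
               A = {x \<in> Sp n p. x i = j} \<and> B = {x \<in> Sp n p. x i = j}))))"
proof -
  have "k \<in> p ` {1..n}" unfolding k_def using assms(1) by (intro Min_in) auto
  then obtain i0 where i0: "i0 \<in> {1..n}" "p i0 = k" by auto
  have p: "\<forall>i\<in>{1..n}. k \<le> p i" unfolding k_def by simp
  have k: "1 \<le> k" using i0 assms(2) by force
  have "\<forall>A B. A \<subseteq> Sp n p \<and> B \<subseteq> Sp n p \<and> cross_intersecting n A B \<longrightarrow>
      real (card A * card B) \<le> real (card (Sp n p))^2 / real k^2"
    using cross_intersecting_card_product_le[OF k p] by blast
  moreover have "\<forall>i\<in>{1..n}. p i = k \<longrightarrow> (\<forall>j\<in>{1..k}.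
      cross_intersecting n (dictator n p i j) (dictator n p i j) \<and>
      real (card (dictator n p i j) * card (dictator n p i j)) = real (card (Sp n p))^2 / real k^2)"
    using cross_intersecting_dictator card_dictator_product by metis
  moreover have "k \<noteq> 2 \<longrightarrow> (\<forall>A B. A \<subseteq> Sp n p \<and> B \<subseteq> Sp n p \<and> cross_intersecting n A B \<and>
      real (card A * card B) = real (card (Sp n p))^2 / real k^2 \<longrightarrow>
      (\<exists>i\<in>{1..n}. p i = k \<and> (\<exists>j\<in>{1..k}. A = dictator n p i j \<and> B = dictator n p i j)))"
    using cross_intersecting_card_product_eq_imp_dictator[OF k _ p i0] by blast
  ultimately show ?thesis
    unfolding dictator_def by blast
qed

end
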